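(* For every $n\ge 1$ and every real $\kappa>\frac{n}{2n-1}$ there exists a doubly stochastic $n\times n$ matrix $\mathcal M_\kappa$ such that no directed $(2n-1)$-regular multigraph on $[n]$ has direct throughput at least $\kappa$ with respect to $\mathcal M_\kappa$.
   Context: Let $n\ge 1$ and $[n]=\{1,\dots,n\}$. Networks are finite directed multigraphs on vertex set $[n]$; self-loops and parallel arcs are allowed. A directed multigraph is directed $r$-regular if every vertex has exactly $r$ outgoing and exactly $r$ incoming arcs (a self-loop at $v$ counts as one outgoing and one incoming arc of $v$). An $n\times n$ matrix is doubly stochastic if all entries are nonnegative and every row and every column sums to $1$. In a directed $(2n-1)$-regular multigraph $G$ on $[n]$ every arc has capacity $\frac{1}{2n-1}$. $G$ directly hosts a nonnegative $n\times n$ matrix $\mathcal M=(a_{i,j})$ if $a_{u,v}\le \frac{m_{u,v}}{2n-1}$ for all $u,v\in[n]$, where $m_{u,v}$ is the number of arcs from $u$ to $v$ in $G$ (i.e., all demand can be routed on single arcs within capacities). The direct throughput of $G$ with respect to a doubly stochastic $\mathcal M$ is the largest $\theta$ such that $G$ directly hosts $\theta\mathcal M$. *)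

theory Defs
  imports Complex_Main
begin

text \<open>A directed multigraph on [n] = {1..n} (loops and parallel arcs allowed) is represented
by its arc-multiplicity function: m u v = number of arcs from u to v (only values on [n] matter).
A matrix on [n] is a function nat => nat => real (only entries on [n] matter).\<close>

definition directed_regular :: "nat \<Rightarrow> nat \<Rightarrow> (nat \<Rightarrow> nat \<Rightarrow> nat) \<Rightarrow> bool" where
  "directed_regular n r m \<longleftrightarrow>
     (\<forall>u\<in>{1..n}. (\<Sum>v\<in>{1..n}. m u v) = r \<and> (\<Sum>v\<in>{1..n}. m v u) = r)"

definition doubly_stochastic :: "nat \<Rightarrow> (nat \<Rightarrow> nat \<Rightarrow> real) \<Rightarrow> bool" where
  "doubly_stochastic n A \<longleftrightarrow>
     (\<forall>i\<in>{1..n}. \<forall>j\<in>{1..n}. A i j \<ge> 0) \<and>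
     (\<forall>i\<in>{1..n}. (\<Sum>j\<in>{1..n}. A i j) = 1) \<and>
     (\<forall>j\<in>{1..n}. (\<Sum>i\<in>{1..n}. A i j) = 1)"

text \<open>Each arc has capacity 1/(2n-1); G directly hosts A if a_{u,v} \<le> m_{u,v}/(2n-1).\<close>
definition directly_hosts :: "nat \<Rightarrow> (nat \<Rightarrow> nat \<Rightarrow> nat) \<Rightarrow> (nat \<Rightarrow> nat \<Rightarrow> real) \<Rightarrow> bool" where
  "directly_hosts n m A \<longleftrightarrow>
     (\<forall>u\<in>{1..n}. \<forall>v\<in>{1..n}. A u v \<le> real (m u v) / (2 * real n - 1))"

text \<open>Direct throughput: the largest theta such that G directly hosts theta*M
(the set of such theta is closed, so its supremum is attained).\<close>
definition direct_throughput :: "nat \<Rightarrow> (nat \<Rightarrow> nat \<Rightarrow> nat) \<Rightarrow> (nat \<Rightarrow> nat \<Rightarrow> real) \<Rightarrow> real" where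
  "direct_throughput n m M = Sup {\<theta>. directly_hosts n m (\<lambda>i j. \<theta> * M i j)}"

end

theory Submission
  imports Defs
begin

text \<open>Take the uniform matrix with all entries 1/n. A row of a (2n-1)-regular multigraph
spreads 2n-1 arcs over n targets, so by pigeonhole some pair (u,v) carries at most one arc.
Hosting theta/n on that pair needs theta/n \<le> 1/(2n-1), i.e. theta \<le> n/(2n-1).\<close>

lemma doubly_stochastic_uniform:
  assumes "n \<ge> 1"
  shows "doubly_stochastic n (\<lambda>i j. 1 / real n)"
  using assms by (simp add: doubly_stochastic_def)

lemma directed_regular_row_has_small_entry:
  assumes "directed_regular n r m" and "u \<in> {1..n}" and "r < k * n"
  shows "\<exists>v\<in>{1..n}. m u v < k"
proof (rule ccontr)
  assume "\<not> ?thesis"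
  then have "(\<Sum>v\<in>{1..n}. k) \<le> (\<Sum>v\<in>{1..n}. m u v)"
    by (intro sum_mono) (simp add: not_less)
  also have "\<dots> = r"
    using assms(1,2) by (simp add: directed_regular_def)
  finally show False
    using assms(3) by (simp add: mult.commute)
qed

lemma direct_throughput_le_entry:
  assumes "u \<in> {1..n}" and "v \<in> {1..n}" and "M u v > 0"
  shows "direct_throughput n m M \<le> real (m u v) / ((2 * real n - 1) * M u v)"
  unfolding direct_throughput_def
proof (rule cSup_least)
  show "{\<theta>. directly_hosts n m (\<lambda>i j. \<theta> * M i j)} \<noteq> {}"
    by (auto simp: directly_hosts_def intro!: exI[of _ 0])
next
  fix \<theta> assume "\<theta> \<in> {\<theta>. directly_hosts n m (\<lambda>i j. \<theta> * M i j)}"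
  then have "\<theta> * M u v \<le> real (m u v) / (2 * real n - 1)"
    using assms(1,2) by (simp add: directly_hosts_def)
  then have "\<theta> \<le> real (m u v) / (2 * real n - 1) / M u v"
    using assms(3) by (simp only: pos_le_divide_eq)
  then show "\<theta> \<le> real (m u v) / ((2 * real n - 1) * M u v)"
    by (simp add: divide_divide_eq_left)
qed

theorem proposition3p6:
  fixes n :: nat and \<kappa> :: real
  assumes "n \<ge> 1" and "\<kappa> > real n / (2 * real n - 1)"
  shows "\<exists>M. doubly_stochastic n M \<and>
           (\<forall>m. directed_regular n (2 * n - 1) m \<longrightarrow> \<not> (direct_throughput n m M \<ge> \<kappa>))"
proof (intro exI[of _ "\<lambda>i j. 1 / real n"] conjI allI impI)
  show "doubly_stochastic n (\<lambda>i j. 1 / real n)"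
    using assms(1) by (rule doubly_stochastic_uniform)
next
  fix m assume "directed_regular n (2 * n - 1) m"
  moreover have "1 \<in> {1..n}"
    using assms(1) by simp
  ultimately obtain v where v: "v \<in> {1..n}" "m 1 v < 2"
    using directed_regular_row_has_small_entry[of n "2 * n - 1" m 1 2] assms(1) by auto
  have "direct_throughput n m (\<lambda>i j. 1 / real n) \<le> real (m 1 v) / ((2 * real n - 1) * (1 / real n))"
    using \<open>1 \<in> {1..n}\<close> v(1) assms(1) by (intro direct_throughput_le_entry) auto
  also have "\<dots> = real n * real (m 1 v) / (2 * real n - 1)"
    by simp
  also have "\<dots> \<le> real n / (2 * real n - 1)"
    using v(2) assms(1) by (intro divide_right_mono) auto
  finally show "\<not> (direct_throughput n m (\<lambda>i j. 1 / real n) \<ge> \<kappa>)"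
    using assms(2) by linarith
qed

end
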